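(* Let $X+_fW$, $Y$ and $Z$ be Hausdorff topological spaces, let $\pi:Y\to X$ and $\varpi:Z\to W$ be continuous maps with $\varpi$ injective, and let $f^\ast:\mathrm{Closed}(Y)\to\mathrm{Closed}(Z)$ be $f^\ast(A)=\mathrm{Cl}_Z\big(\varpi^{-1}(f(\mathrm{Cl}_X(\pi(A))))\big)$. Then $Y+_{f^\ast}Z$ is Hausdorff.
   Context: $\mathrm{Closed}(A)$ is the set of closed subsets of a space $A$; $f:\mathrm{Closed}(X)\to\mathrm{Closed}(W)$ is admissible if $f(\emptyset)=\emptyset$ and $f$ preserves finite unions ($f^\ast$ is then admissible as well); $X+_fW$ is $X\sqcup W$ with closed sets the $D$ such that $D\cap X$ is closed in $X$, $D\cap W$ closed in $W$ and $f(D\cap X)\subseteq D$. *)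

theory Defs
  imports "HOL-Analysis.Analysis"
begin

definition admissible :: "'a topology \<Rightarrow> 'b topology \<Rightarrow> ('a set \<Rightarrow> 'b set) \<Rightarrow> bool" where
  "admissible X W f \<longleftrightarrow>
     (\<forall>A. closedin X A \<longrightarrow> closedin W (f A)) \<and>
     f {} = {} \<and>
     (\<forall>A B. closedin X A \<longrightarrow> closedin X B \<longrightarrow> f (A \<union> B) = f A \<union> f B)"

text \<open>Closed sets of X +_f W: subsets D of the disjoint union with D \<inter> X closed
  in X, D \<inter> W closed in W and f(D \<inter> X) \<subseteq> D.\<close>
definition glue_closed :: "'a topology \<Rightarrow> 'b topology \<Rightarrow> ('a set \<Rightarrow> 'b set) \<Rightarrow> ('a + 'b) set \<Rightarrow> bool" where
  "glue_closed X W f D \<longleftrightarrow>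
     D \<subseteq> Inl ` topspace X \<union> Inr ` topspace W \<and>
     closedin X (Inl -` D) \<and>
     closedin W (Inr -` D) \<and>
     Inr ` f (Inl -` D) \<subseteq> D"

definition glue_top :: "'a topology \<Rightarrow> 'b topology \<Rightarrow> ('a set \<Rightarrow> 'b set) \<Rightarrow> ('a + 'b) topology" where
  "glue_top X W f = topology (\<lambda>U. U \<subseteq> Inl ` topspace X \<union> Inr ` topspace W \<and>
       glue_closed X W f ((Inl ` topspace X \<union> Inr ` topspace W) - U))"

definition fstar :: "'a topology \<Rightarrow> 'd topology \<Rightarrow> ('c \<Rightarrow> 'a) \<Rightarrow> ('d \<Rightarrow> 'b)
                     \<Rightarrow> ('a set \<Rightarrow> 'b set) \<Rightarrow> 'c set \<Rightarrow> 'd set" where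
  "fstar X Z \<pi> \<omega> f A = Z closure_of (topspace Z \<inter> \<omega> -` f (X closure_of (\<pi> ` A)))"

end

theory Submission
  imports Defs
begin

text \<open>The map \<pi> \<squnion> \<omega> from Y +_{f^*} Z to X +_f W is continuous, since f^* sends the
  preimage of a closed set C of X into the preimage of f(C). Two points not both in Y have
  distinct images, \<omega> being injective, and are separated by preimages of disjoint open sets.
  Two points of Y are separated by images of disjoint open sets of Y, which remain open in
  the glued space because their complements contain all of Z.\<close>

lemma admissible_mono:
  assumes "admissible X W f" "closedin X A" "closedin X B" "A \<subseteq> B"
  shows "f A \<subseteq> f B"
proof -
  have "f B = f (A \<union> B)" using \<open>A \<subseteq> B\<close> by (simp add: Un_absorb1)
  also have "\<dots> = f A \<union> f B" using assms unfolding admissible_def by blast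
  finally show ?thesis by blast
qed

definition glue_open :: "'a topology \<Rightarrow> 'b topology \<Rightarrow> ('a set \<Rightarrow> 'b set) \<Rightarrow> ('a + 'b) set \<Rightarrow> bool"
  where "glue_open X W f U \<longleftrightarrow> U \<subseteq> Inl ` topspace X \<union> Inr ` topspace W \<and>
     openin X (Inl -` U) \<and> openin W (Inr -` U) \<and>
     f (topspace X - Inl -` U) \<inter> Inr -` U = {}"

lemma glue_closed_Diff_iff_glue_open:
  assumes "admissible X W f" and U: "U \<subseteq> Inl ` topspace X \<union> Inr ` topspace W"
  shows "glue_closed X W f ((Inl ` topspace X \<union> Inr ` topspace W) - U) \<longleftrightarrow> glue_open X W f U"
proof -
  let ?S = "Inl ` topspace X \<union> Inr ` topspace W"
  have Inl_Diff: "Inl -` (?S - U) = topspace X - Inl -` U"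
    and Inr_Diff: "Inr -` (?S - U) = topspace W - Inr -` U" by auto
  have "openin X (Inl -` U) \<longleftrightarrow> closedin X (topspace X - Inl -` U)"
    and "openin W (Inr -` U) \<longleftrightarrow> closedin W (topspace W - Inr -` U)"
    using U by (auto simp: openin_closedin_eq)
  moreover have "f (topspace X - Inl -` U) \<subseteq> topspace W"
    if "closedin X (topspace X - Inl -` U)"
    using assms that unfolding admissible_def by (meson closedin_subset)
  ultimately show ?thesis
    unfolding glue_closed_def glue_open_def Inl_Diff Inr_Diff using U by blast
qed

lemma istopology_glue_open:
  assumes "admissible X W f"
  shows "istopology (glue_open X W f)"
  unfolding istopology_def
proof (intro conjI allI impI)
  fix S T assume S: "glue_open X W f S" and T: "glue_open X W f T"
  have "topspace X - Inl -` (S \<inter> T) = (topspace X - Inl -` S) \<union> (topspace X - Inl -` T)"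
    by auto
  moreover have "closedin X (topspace X - Inl -` S)" "closedin X (topspace X - Inl -` T)"
    using S T unfolding glue_open_def by auto
  ultimately have "f (topspace X - Inl -` (S \<inter> T)) =
      f (topspace X - Inl -` S) \<union> f (topspace X - Inl -` T)"
    using assms unfolding admissible_def by simp
  then show "glue_open X W f (S \<inter> T)"
    using S T unfolding glue_open_def by (auto simp: vimage_Int)
next
  fix K assume K: "\<forall>S\<in>K. glue_open X W f S"
  have open_Inl: "openin X (Inl -` \<Union>K)" and open_Inr: "openin W (Inr -` \<Union>K)"
    using K unfolding glue_open_def vimage_Union by (auto intro: openin_Union)
  have "f (topspace X - Inl -` \<Union>K) \<inter> Inr -` S = {}" if "S \<in> K" for S
  proof -
    have "f (topspace X - Inl -` \<Union>K) \<subseteq> f (topspace X - Inl -` S)"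
      using K that open_Inl unfolding glue_open_def by (intro admissible_mono[OF assms]) auto
    then show ?thesis using K that unfolding glue_open_def by auto
  qed
  moreover have "\<Union>K \<subseteq> Inl ` topspace X \<union> Inr ` topspace W"
    using K unfolding glue_open_def by blast
  ultimately show "glue_open X W f (\<Union>K)"
    using open_Inl open_Inr unfolding glue_open_def vimage_Union by blast
qed

lemma openin_glue_top:
  assumes "admissible X W f"
  shows "openin (glue_top X W f) U \<longleftrightarrow> glue_open X W f U"
proof -
  have "(\<lambda>U. U \<subseteq> Inl ` topspace X \<union> Inr ` topspace W \<and>
        glue_closed X W f ((Inl ` topspace X \<union> Inr ` topspace W) - U)) = glue_open X W f"
  proof
    fix U
    have "glue_open X W f U \<Longrightarrow> U \<subseteq> Inl ` topspace X \<union> Inr ` topspace W"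
      unfolding glue_open_def by blast
    then show "(U \<subseteq> Inl ` topspace X \<union> Inr ` topspace W \<and>
        glue_closed X W f ((Inl ` topspace X \<union> Inr ` topspace W) - U)) = glue_open X W f U"
      using glue_closed_Diff_iff_glue_open[OF assms, of U] by blast
  qed
  then show ?thesis
    unfolding glue_top_def using istopology_glue_open[OF assms] by simp
qed

lemma topspace_glue_top:
  assumes "admissible X W f"
  shows "topspace (glue_top X W f) = Inl ` topspace X \<union> Inr ` topspace W"
proof -
  have "Inl -` (Inl ` topspace X \<union> Inr ` topspace W) = topspace X"
    and "Inr -` (Inl ` topspace X \<union> Inr ` topspace W) = topspace W" by auto
  then have "glue_open X W f (Inl ` topspace X \<union> Inr ` topspace W)"
    using assms unfolding glue_open_def admissible_def by simp
  moreover have "U \<subseteq> Inl ` topspace X \<union> Inr ` topspace W" if "glue_open X W f U" for U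
    using that unfolding glue_open_def by blast
  ultimately show ?thesis
    unfolding topspace_def openin_glue_top[OF assms] by blast
qed

lemma openin_glue_top_Inl_image:
  assumes "admissible X W f" and "openin X V"
  shows "openin (glue_top X W f) (Inl ` V)"
proof -
  have Inl_V: "Inl -` Inl ` V = V" and Inr_V: "Inr -` Inl ` V = ({} :: 'b set)" by auto
  show ?thesis
    unfolding openin_glue_top[OF assms(1)] glue_open_def Inl_V Inr_V
    using assms openin_subset[OF \<open>openin X V\<close>] by auto
qed

lemma continuous_map_glue_top_map_sum:
  assumes "admissible X W f" and "admissible Y Z g"
    and \<pi>: "continuous_map Y X \<pi>" and \<omega>: "continuous_map Z W \<omega>"
    and g_le_f: "\<And>C. closedin X C \<Longrightarrow> g (topspace Y \<inter> \<pi> -` C) \<subseteq> \<omega> -` f C"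
  shows "continuous_map (glue_top Y Z g) (glue_top X W f) (map_sum \<pi> \<omega>)"
  unfolding continuous_map_def
proof (intro conjI allI impI)
  show "map_sum \<pi> \<omega> \<in> topspace (glue_top Y Z g) \<rightarrow> topspace (glue_top X W f)"
    using \<pi> \<omega> by (auto simp: topspace_glue_top assms(1,2) continuous_map_def)
next
  fix Q assume "openin (glue_top X W f) Q"
  then have Q: "glue_open X W f Q" using assms(1) by (simp add: openin_glue_top)
  let ?Q' = "{p \<in> topspace (glue_top Y Z g). map_sum \<pi> \<omega> p \<in> Q}"
  let ?C = "topspace X - Inl -` Q"
  have Inl_Q': "Inl -` ?Q' = {y \<in> topspace Y. \<pi> y \<in> Inl -` Q}"
    and Inr_Q': "Inr -` ?Q' = {z \<in> topspace Z. \<omega> z \<in> Inr -` Q}"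
    by (auto simp: topspace_glue_top assms(2))
  have "closedin X ?C" using Q unfolding glue_open_def by auto
  moreover have "topspace Y - Inl -` ?Q' = topspace Y \<inter> \<pi> -` ?C"
    using \<pi> unfolding Inl_Q' by (auto simp: continuous_map_def)
  ultimately have "g (topspace Y - Inl -` ?Q') \<subseteq> \<omega> -` f ?C" using g_le_f by simp
  then have "g (topspace Y - Inl -` ?Q') \<inter> Inr -` ?Q' = {}"
    using Q unfolding Inr_Q' glue_open_def by auto
  moreover have "openin Y {y \<in> topspace Y. \<pi> y \<in> Inl -` Q}"
    using Q unfolding glue_open_def by (intro openin_continuous_map_preimage[OF \<pi>]) simp
  moreover have "openin Z {z \<in> topspace Z. \<omega> z \<in> Inr -` Q}"
    using Q unfolding glue_open_def by (intro openin_continuous_map_preimage[OF \<omega>]) simp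
  moreover have "?Q' \<subseteq> Inl ` topspace Y \<union> Inr ` topspace Z"
    using topspace_glue_top[OF assms(2)] by blast
  ultimately have "glue_open Y Z g ?Q'" unfolding glue_open_def Inl_Q' Inr_Q' by blast
  then show "openin (glue_top Y Z g) ?Q'" using assms(2) by (simp add: openin_glue_top)
qed

lemma admissible_fstar:
  assumes "admissible X W f"
  shows "admissible Y Z (fstar X Z \<pi> \<omega> f)"
proof -
  have "fstar X Z \<pi> \<omega> f (A \<union> B) = fstar X Z \<pi> \<omega> f A \<union> fstar X Z \<pi> \<omega> f B" for A B
  proof -
    have "f (X closure_of (\<pi> ` (A \<union> B))) =
        f (X closure_of (\<pi> ` A)) \<union> f (X closure_of (\<pi> ` B))"
      using assms unfolding admissible_def by (simp add: image_Un closure_of_Un)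
    then show ?thesis
      unfolding fstar_def by (simp add: vimage_Un Int_Un_distrib closure_of_Un)
  qed
  moreover have "fstar X Z \<pi> \<omega> f {} = {}"
    using assms unfolding admissible_def fstar_def by simp
  ultimately show ?thesis
    unfolding admissible_def fstar_def by simp
qed

lemma fstar_vimage_subset:
  assumes "admissible X W f"
    and \<pi>: "continuous_map Y X \<pi>" and \<omega>: "continuous_map Z W \<omega>" and C: "closedin X C"
  shows "fstar X Z \<pi> \<omega> f (topspace Y \<inter> \<pi> -` C) \<subseteq> \<omega> -` f C"
proof -
  have "X closure_of (\<pi> ` (topspace Y \<inter> \<pi> -` C)) \<subseteq> C"
    by (rule closure_of_minimal[OF _ C]) blast
  then have "f (X closure_of (\<pi> ` (topspace Y \<inter> \<pi> -` C))) \<subseteq> f C"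
    by (rule admissible_mono[OF assms(1) closedin_closure_of C])
  moreover have "closedin Z {z \<in> topspace Z. \<omega> z \<in> f C}"
    using assms(1) C by (intro closedin_continuous_map_preimage[OF \<omega>]) (simp add: admissible_def)
  ultimately have "fstar X Z \<pi> \<omega> f (topspace Y \<inter> \<pi> -` C) \<subseteq> {z \<in> topspace Z. \<omega> z \<in> f C}"
    unfolding fstar_def by (intro closure_of_minimal) auto
  then show ?thesis by blast
qed

lemma Hausdorff_space_separate_by_continuous_map:
  assumes "Hausdorff_space T" and g: "continuous_map S T g"
    and x: "x \<in> topspace S" and y: "y \<in> topspace S" and "g x \<noteq> g y"
  shows "\<exists>U V. openin S U \<and> openin S V \<and> x \<in> U \<and> y \<in> V \<and> disjnt U V"
proof -
  have "g x \<in> topspace T" "g y \<in> topspace T"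
    using g x y by (auto simp: continuous_map_def)
  then obtain U V where "openin T U" "openin T V" "g x \<in> U" "g y \<in> V" "disjnt U V"
    using assms(1) \<open>g x \<noteq> g y\<close> unfolding Hausdorff_space_def by blast
  then show ?thesis
  proof (intro exI conjI)
    show "openin S {x \<in> topspace S. g x \<in> U}" "openin S {x \<in> topspace S. g x \<in> V}"
      using \<open>openin T U\<close> \<open>openin T V\<close> by (auto intro: openin_continuous_map_preimage[OF g])
    show "disjnt {x \<in> topspace S. g x \<in> U} {x \<in> topspace S. g x \<in> V}"
      using \<open>disjnt U V\<close> by (auto simp: disjnt_def)
  qed (use x y in auto)
qed

lemma Hausdorff_space_glue_top_by_continuous_map:
  assumes adm: "admissible Y Z g" and "Hausdorff_space Y" and "Hausdorff_space T"
    and h: "continuous_map (glue_top Y Z g) T h"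
    and h_inj: "inj_on h (Inr ` topspace Z)"
    and h_Inl_Inr: "\<And>y z. y \<in> topspace Y \<Longrightarrow> z \<in> topspace Z \<Longrightarrow> h (Inl y) \<noteq> h (Inr z)"
  shows "Hausdorff_space (glue_top Y Z g)"
  unfolding Hausdorff_space_def
proof clarify
  fix p q assume p: "p \<in> topspace (glue_top Y Z g)" and q: "q \<in> topspace (glue_top Y Z g)"
    and "p \<noteq> q"
  show "\<exists>U V. openin (glue_top Y Z g) U \<and> openin (glue_top Y Z g) V \<and> p \<in> U \<and> q \<in> V \<and> disjnt U V"
  proof (cases "\<exists>y1 y2. p = Inl y1 \<and> q = Inl y2")
    case True
    then obtain y1 y2 where pq: "p = Inl y1" "q = Inl y2" by blast
    then have "y1 \<in> topspace Y" "y2 \<in> topspace Y" "y1 \<noteq> y2"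
      using p q \<open>p \<noteq> q\<close> by (auto simp: topspace_glue_top[OF adm])
    then obtain V1 V2 where "openin Y V1" "openin Y V2" "y1 \<in> V1" "y2 \<in> V2" "disjnt V1 V2"
      using \<open>Hausdorff_space Y\<close> unfolding Hausdorff_space_def by blast
    moreover have "disjnt (Inl ` V1) (Inl ` V2)"
      using \<open>disjnt V1 V2\<close> by (auto simp: disjnt_def)
    ultimately show ?thesis
      using pq openin_glue_top_Inl_image[OF adm] by blast
  next
    case False
    have "h p \<noteq> h q"
      using False p q \<open>p \<noteq> q\<close> h_inj h_Inl_Inr
      by (cases p; cases q) (auto simp: topspace_glue_top[OF adm] inj_on_def dest: sym)
    then show ?thesis by (rule Hausdorff_space_separate_by_continuous_map[OF assms(3) h p q])
  qed
qed

theorem mainTheorem19: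
  fixes X :: "'a topology" and W :: "'b topology"
    and Y :: "'c topology" and Z :: "'d topology"
    and f :: "'a set \<Rightarrow> 'b set" and \<pi> :: "'c \<Rightarrow> 'a" and \<omega> :: "'d \<Rightarrow> 'b"
  assumes "admissible X W f"
    and "Hausdorff_space (glue_top X W f)"
    and "Hausdorff_space Y" and "Hausdorff_space Z"
    and "continuous_map Y X \<pi>" and "continuous_map Z W \<omega>"
    and "inj_on \<omega> (topspace Z)"
  shows "Hausdorff_space (glue_top Y Z (fstar X Z \<pi> \<omega> f))"
proof -
  have adm: "admissible Y Z (fstar X Z \<pi> \<omega> f)"
    by (rule admissible_fstar[OF assms(1)])
  have "continuous_map (glue_top Y Z (fstar X Z \<pi> \<omega> f)) (glue_top X W f) (map_sum \<pi> \<omega>)"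
    using fstar_vimage_subset[OF assms(1,5,6)]
    by (rule continuous_map_glue_top_map_sum[OF assms(1) adm assms(5,6)])
  moreover have "inj_on (map_sum \<pi> \<omega>) (Inr ` topspace Z)"
    using assms(7) by (auto simp: inj_on_def)
  ultimately show ?thesis
    by (rule Hausdorff_space_glue_top_by_continuous_map[OF adm assms(3,2)]) simp
qed

end
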